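(* Let $\eta>0$, $\alpha\in(1/2,1)$, $\eta_i=\eta i^{-\alpha}$, let $\{e_i\}$ be i.i.d. real random variables with $\mathbb{E}e_i=0$ and $0<\mathbb{E}e_i^2<\infty$, let $x_0$ be deterministic, and let $X_0=x_0$, $X_i=(1-\eta_i)X_{i-1}+\eta_ie_i$ for $i\ge1$. Let $\ell_i=\lfloor Ci^{\alpha}\log i\rfloor$ for a constant $C>0$, $t_i=i-\ell_i+1$, and $W_i=\sum_{j=t_i}^{i-1}X_j$. Then for all $1\le j<i$: (1) $\mathrm{Var}(W_i)\lesssim\ell_i$; (2) $\mathrm{Cov}(X_i,W_j)\lesssim\exp\{\frac{\eta}{1-\alpha}(j^{1-\alpha}-i^{1-\alpha})\}\le\exp\{-\eta i^{-\alpha}(i-j)\}$; (3) $\mathrm{Cov}(X_j,W_i)\lesssim\mathcal{O}(1)$; (4) $\mathrm{Cov}(W_i,W_j)\lesssim\ell_j$.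
   Context: $a\lesssim b$ means $a\le Cb$ with a constant independent of $i,j$. *)

theory Defs
  imports "HOL-Probability.Probability"
begin

definition step :: "real \<Rightarrow> real \<Rightarrow> nat \<Rightarrow> real" where
  "step \<eta> \<alpha> i = \<eta> * real i powr (-\<alpha>)"

primrec Xseq :: "real \<Rightarrow> real \<Rightarrow> real \<Rightarrow> (nat \<Rightarrow> 'a \<Rightarrow> real) \<Rightarrow> nat \<Rightarrow> 'a \<Rightarrow> real" where
  "Xseq \<eta> \<alpha> x0 e 0 \<omega> = x0"
| "Xseq \<eta> \<alpha> x0 e (Suc i) \<omega> =
     (1 - step \<eta> \<alpha> (Suc i)) * Xseq \<eta> \<alpha> x0 e i \<omega> + step \<eta> \<alpha> (Suc i) * e (Suc i) \<omega>"

definition blen :: "real \<Rightarrow> real \<Rightarrow> nat \<Rightarrow> int" where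
  "blen C \<alpha> i = \<lfloor>C * real i powr \<alpha> * ln (real i)\<rfloor>"

definition bstart :: "real \<Rightarrow> real \<Rightarrow> nat \<Rightarrow> int" where
  "bstart C \<alpha> i = int i - blen C \<alpha> i + 1"

text \<open>W_i = sum of X_j over integers j with t_i <= j <= i-1 (and j >= 0, as X_j
  is only defined for j >= 0).\<close>
definition Wblock :: "real \<Rightarrow> real \<Rightarrow> real \<Rightarrow> real \<Rightarrow> (nat \<Rightarrow> 'a \<Rightarrow> real) \<Rightarrow> nat \<Rightarrow> 'a \<Rightarrow> real" where
  "Wblock \<eta> \<alpha> C x0 e i \<omega> =
     (\<Sum>j \<in> {j. int j \<ge> bstart C \<alpha> i \<and> j < i}. Xseq \<eta> \<alpha> x0 e j \<omega>)"

definition (in prob_space) cov :: "('a \<Rightarrow> real) \<Rightarrow> ('a \<Rightarrow> real) \<Rightarrow> real" where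
  "cov X Y = expectation (\<lambda>\<omega>. (X \<omega> - expectation X) * (Y \<omega> - expectation Y))"

end

theory Submission
  imports Defs "HOL-Real_Asymp.Real_Asymp"
begin

(*
  Unrolling the recursion writes X_k as a deterministic term plus
  sum_m eta_m D(m,k) e_m with D(m,k) = prod_(m<r<=k) (1 - eta_r), so that
  Cov(X_k, X_l) = sigma^2 kernel(k,l).  Since |D(m,k)| <~ exp(-(S_k - S_m)) with
  S_n = eta_1 + ... + eta_n, and eta_m exp(-(S_k - S_m)/2) <~ eta_k because the steps
  decay only polynomially, |kernel(k,l)| <~ eta_k exp(-(S_l - S_k)) for k <= l.
  The two discrete integrals sum_(m<=k) eta_m exp(-(S_k - S_m)) <= 1 + eta and
  sum_(k>l) eta_k exp(-(S_k - S_l)/2) <= 2 then bound every row sum of the kernel,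
  which gives the bounds proportional to the block length.  The block of W_j lies
  before j, so Cov(X_i, W_j) carries the factor exp(-(S_i - S_j)), and comparing
  S_i - S_j with the integral of eta t^(-alpha) gives the stated exponential.
*)

lemma powr_diff_mvt_bounds:
  fixes x y a :: real
  assumes "0 < x" "x \<le> y" "0 < a" "a < 1"
  shows "a * y powr (a - 1) * (y - x) \<le> y powr a - x powr a"
    and "y powr a - x powr a \<le> a * x powr (a - 1) * (y - x)"
proof -
  have "a * y powr (a - 1) * (y - x) \<le> y powr a - x powr a
      \<and> y powr a - x powr a \<le> a * x powr (a - 1) * (y - x)"
  proof (cases "x = y")
    case False
    then have xy: "x < y" using assms by simp
    have "\<exists>z. x < z \<and> z < y \<and> y powr a - x powr a = (y - x) * (a * z powr (a - 1))"
      by (rule MVT2[OF xy]) (use assms in \<open>auto intro!: has_real_derivative_powr\<close>)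
    then obtain z where z: "x < z" "z < y" "y powr a - x powr a = (y - x) * (a * z powr (a - 1))"
      by blast
    have "y powr (a - 1) \<le> z powr (a - 1)" "z powr (a - 1) \<le> x powr (a - 1)"
      using z assms by (auto intro!: powr_mono2')
    then have "(y - x) * (a * y powr (a - 1)) \<le> (y - x) * (a * z powr (a - 1))"
      "(y - x) * (a * z powr (a - 1)) \<le> (y - x) * (a * x powr (a - 1))"
      using xy assms by (auto intro!: mult_left_mono)
    then show ?thesis unfolding z(3) by (simp add: algebra_simps)
  qed simp
  then show "a * y powr (a - 1) * (y - x) \<le> y powr a - x powr a"
    and "y powr a - x powr a \<le> a * x powr (a - 1) * (y - x)" by auto
qed

lemma eventually_mono_imp_quasi_mono:
  fixes \<phi> :: "nat \<Rightarrow> real"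
  assumes pos: "\<And>n. 0 < \<phi> n" and mono: "\<And>n. N \<le> n \<Longrightarrow> \<phi> n \<le> \<phi> (Suc n)"
  obtains c where "1 \<le> c" "\<And>l k. l \<le> k \<Longrightarrow> \<phi> l \<le> c * \<phi> k"
proof -
  define m where "m = Min (\<phi> ` {..N})"
  define c where "c = max 1 (Max (\<phi> ` {..N}) / m)"
  have m_pos: "0 < m"
    unfolding m_def using pos by (subst Min_gr_iff) auto
  have mono_from_N: "\<phi> l \<le> \<phi> k" if "N \<le> l" "l \<le> k" for l k
    using that(2)
  proof (induction k rule: dec_induct)
    case (step n)
    then show ?case using mono[of n] that(1) by linarith
  qed simp
  have lower: "m \<le> \<phi> k" for k
  proof (cases "k \<le> N")
    case False
    then have "\<phi> N \<le> \<phi> k" by (intro mono_from_N) auto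
    moreover have "m \<le> \<phi> N" unfolding m_def by (intro Min_le) auto
    ultimately show ?thesis by linarith
  qed (auto simp: m_def)
  have "\<phi> l \<le> c * \<phi> k" if "l \<le> k" for l k
  proof (cases "N \<le> l")
    case True
    then have "\<phi> l \<le> \<phi> k" using that by (rule mono_from_N)
    also have "\<dots> \<le> c * \<phi> k" using pos[of k] by (simp add: c_def)
    finally show ?thesis .
  next
    case False
    then have "\<phi> l \<le> Max (\<phi> ` {..N})" by (intro Max_ge) auto
    also have "\<dots> = Max (\<phi> ` {..N}) / m * m" using m_pos by simp
    also have "\<dots> \<le> c * \<phi> k"
      using lower[of k] m_pos pos[of k] by (intro mult_mono) (auto simp: c_def)
    finally show ?thesis .
  qed
  then show thesis using that[of c] by (simp add: c_def)
qed

locale step_schedule =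
  fixes \<eta> \<alpha> :: real
  assumes eta_pos: "0 < \<eta>" and alpha_pos: "0 < \<alpha>" and alpha_less_1: "\<alpha> < 1"
begin

abbreviation s :: "nat \<Rightarrow> real" where "s \<equiv> step \<eta> \<alpha>"

definition cum_step :: "nat \<Rightarrow> real" where
  "cum_step n = (\<Sum>r = 1..n. s r)"

definition damping :: "nat \<Rightarrow> nat \<Rightarrow> real" where
  "damping k l = (\<Prod>r = Suc k..l. 1 - s r)"

lemma step_0 [simp]: "s 0 = 0"
  by (simp add: step_def)

lemma step_nonneg: "0 \<le> s r"
  using eta_pos by (simp add: step_def)

lemma step_pos: "1 \<le> r \<Longrightarrow> 0 < s r"
  using eta_pos by (simp add: step_def)

lemma step_le_eta: "s r \<le> \<eta>"
proof (cases "r = 0")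
  case False
  then have "real r powr (-\<alpha>) \<le> 1"
    using alpha_pos by (simp add: powr_minus inverse_le_1_iff ge_one_powr_ge_zero)
  then show ?thesis
    using eta_pos unfolding step_def by (simp add: mult_left_le)
qed (use eta_pos in simp)

lemma eventually_step_le_1: "eventually (\<lambda>r. s r \<le> 1) sequentially"
  using eta_pos alpha_pos unfolding step_def by real_asymp

lemma eventually_step_le_next: "eventually (\<lambda>n. s n \<le> s (Suc n) * exp (s (Suc n) / 2)) sequentially"
  using eta_pos alpha_pos alpha_less_1 unfolding step_def of_nat_Suc by real_asymp

lemma cum_step_Suc [simp]: "cum_step (Suc n) = cum_step n + s (Suc n)"
  by (simp add: cum_step_def)

lemma cum_step_diff: "l \<le> k \<Longrightarrow> cum_step k - cum_step l = (\<Sum>r = Suc l..k. s r)"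
  by (induction k rule: dec_induct) auto

lemma cum_step_mono: "l \<le> k \<Longrightarrow> cum_step l \<le> cum_step k"
  using cum_step_diff[of l k] sum_nonneg[of "{Suc l..k}" s] step_nonneg by simp

lemma damping_le_exp:
  obtains B where "0 \<le> B" "\<And>k l. k \<le> l \<Longrightarrow> \<bar>damping k l\<bar> \<le> B * exp (-(cum_step l - cum_step k))"
proof -
  obtain N where N: "\<And>r. N \<le> r \<Longrightarrow> s r \<le> 1"
    using eventually_step_le_1 unfolding eventually_sequentially by blast
  define f where "f r = (if r < N then exp (2 * \<eta>) else 1)" for r
  \<comment> \<open>\<open>|1 - x| \<le> exp (-x)\<close> needs \<open>x \<le> 1\<close>; the finitely many larger steps cost a bounded factor.\<close>
  have factor: "\<bar>1 - s r\<bar> \<le> f r * exp (- s r)" for r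
  proof (cases "r < N")
    case True
    have "\<bar>1 - s r\<bar> \<le> 1 + s r" using step_nonneg[of r] by simp
    also have "\<dots> \<le> exp (s r)" by (rule exp_ge_add_one_self)
    also have "\<dots> = exp (2 * s r) * exp (- s r)" by (simp flip: exp_add)
    also have "\<dots> \<le> f r * exp (- s r)" using True step_le_eta[of r] by (simp add: f_def)
    finally show ?thesis .
  next
    case False
    then show ?thesis
      using N[of r] step_nonneg[of r] exp_ge_add_one_self[of "- s r"] by (simp add: f_def)
  qed
  have f_prod: "(\<Prod>r\<in>A. f r) \<le> exp (2 * \<eta>) ^ N" if "finite A" for A
  proof -
    have "(\<Prod>r\<in>A. f r) = (\<Prod>r\<in>A \<inter> {..<N}. exp (2 * \<eta>))"
      unfolding prod.inter_restrict[OF that] by (simp add: f_def)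
    also have "\<dots> = exp (2 * \<eta>) ^ card (A \<inter> {..<N})"
      by (rule prod_constant)
    also have "\<dots> \<le> exp (2 * \<eta>) ^ N"
      using eta_pos card_mono[of "{..<N}" "A \<inter> {..<N}"] by (intro power_increasing) auto
    finally show ?thesis .
  qed
  have "\<bar>damping k l\<bar> \<le> exp (2 * \<eta>) ^ N * exp (-(cum_step l - cum_step k))" if "k \<le> l" for k l
  proof -
    have "\<bar>damping k l\<bar> = (\<Prod>r = Suc k..l. \<bar>1 - s r\<bar>)"
      by (simp add: damping_def abs_prod)
    also have "\<dots> \<le> (\<Prod>r = Suc k..l. f r * exp (- s r))"
      by (intro prod_mono) (simp add: factor)
    also have "\<dots> = (\<Prod>r = Suc k..l. f r) * exp (-(cum_step l - cum_step k))"
      using that by (simp add: prod.distrib cum_step_diff flip: exp_sum sum_negf)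
    also have "\<dots> \<le> exp (2 * \<eta>) ^ N * exp (-(cum_step l - cum_step k))"
      by (intro mult_right_mono f_prod) auto
    finally show ?thesis .
  qed
  then show thesis using that[of "exp (2 * \<eta>) ^ N"] by simp
qed

lemma sum_step_exp_backward_le:
  "(\<Sum>m\<le>k. s m * exp (-(cum_step k - cum_step m))) \<le> 1 + \<eta>"
proof (induction k)
  case (Suc k)
  let ?x = "s (Suc k)"
  have "(\<Sum>m\<le>Suc k. s m * exp (-(cum_step (Suc k) - cum_step m)))
      = exp (- ?x) * (\<Sum>m\<le>k. s m * exp (-(cum_step k - cum_step m))) + ?x"
    by (simp add: sum_distrib_left algebra_simps flip: exp_add)
  also have "\<dots> \<le> exp (- ?x) * (1 + \<eta>) + ?x"
    using Suc by (intro add_right_mono mult_left_mono) auto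
  also have "\<dots> \<le> 1 + \<eta>"
  proof -
    have x: "0 \<le> ?x" "?x \<le> \<eta>" using step_nonneg step_le_eta by auto
    have "exp (- ?x) * (1 + ?x) \<le> 1"
      using exp_ge_add_one_self[of ?x] by (simp add: exp_minus field_simps)
    then have "exp (- ?x) \<le> 1 / (1 + ?x)" using x by (simp add: field_simps)
    then have "exp (- ?x) * (1 + \<eta>) \<le> (1 + \<eta>) / (1 + ?x)"
      using mult_right_mono[of _ _ "1 + \<eta>"] eta_pos by fastforce
    moreover have "(1 + \<eta>) / (1 + ?x) + ?x \<le> 1 + \<eta>"
      using x by (simp add: field_simps) (simp add: algebra_simps mult_right_mono power2_eq_square)
    ultimately show ?thesis by linarith
  qed
  finally show ?case .
qed (use eta_pos in simp)

lemma sum_step_exp_forward_le: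
  "(\<Sum>k\<in>{l<..n}. s k * exp (-(cum_step k - cum_step l) / 2)) \<le> 2"
proof (cases "l \<le> n")
  case True
  \<comment> \<open>Each term is at most the increment of \<open>-2 exp (-(cum_step k - cum_step l) / 2)\<close>.\<close>
  have "(\<Sum>k\<in>{l<..n}. s k * exp (-(cum_step k - cum_step l) / 2))
      \<le> 2 - 2 * exp (-(cum_step n - cum_step l) / 2)"
    using True
  proof (induction n rule: dec_induct)
    case (step m)
    let ?x = "s (Suc m)" and ?A = "cum_step m - cum_step l"
    have "?x / 2 \<le> exp (?x / 2) - 1"
      using exp_ge_add_one_self[of "?x / 2"] by linarith
    then have "?x / 2 * exp (-(?A + ?x) / 2) \<le> (exp (?x / 2) - 1) * exp (-(?A + ?x) / 2)"
      by (rule mult_right_mono) simp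
    also have "\<dots> = exp (- ?A / 2) - exp (-(?A + ?x) / 2)"
      by (simp add: algebra_simps diff_divide_distrib add_divide_distrib flip: exp_add)
    finally have new_term: "?x * exp (-(?A + ?x) / 2) \<le> 2 * exp (- ?A / 2) - 2 * exp (-(?A + ?x) / 2)"
      by linarith
    have "{l<..Suc m} = insert (Suc m) {l<..m}" using step.hyps by auto
    then have "(\<Sum>k\<in>{l<..Suc m}. s k * exp (-(cum_step k - cum_step l) / 2))
        = (\<Sum>k\<in>{l<..m}. s k * exp (-(cum_step k - cum_step l) / 2)) + ?x * exp (-(?A + ?x) / 2)"
      by (simp add: algebra_simps)
    also have "\<dots> \<le> 2 - 2 * exp (-(?A + ?x) / 2)"
      using step.IH new_term by simp
    finally show ?case by (simp add: algebra_simps)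
  qed simp
  then show ?thesis by (smt (verit) exp_gt_zero)
qed simp

lemma step_ratio_le:
  obtains c where "1 \<le> c" "\<And>l k. l \<le> k \<Longrightarrow> s l * exp (-(cum_step k - cum_step l) / 2) \<le> c * s k"
proof -
  \<comment> \<open>Because \<open>\<alpha> < 1\<close>, \<open>s n * exp (cum_step n / 2)\<close> is eventually nondecreasing.\<close>
  define \<phi> where "\<phi> n = s (Suc n) * exp (cum_step (Suc n) / 2)" for n
  obtain N where N: "\<And>n. N \<le> n \<Longrightarrow> s n \<le> s (Suc n) * exp (s (Suc n) / 2)"
    using eventually_step_le_next unfolding eventually_sequentially by blast
  have "\<phi> n \<le> \<phi> (Suc n)" if "N \<le> n" for n
  proof -
    have "\<phi> n \<le> s (Suc (Suc n)) * exp (s (Suc (Suc n)) / 2) * exp (cum_step (Suc n) / 2)"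
      unfolding \<phi>_def using N[of "Suc n"] that by (intro mult_right_mono) auto
    also have "\<dots> = \<phi> (Suc n)"
      by (simp add: \<phi>_def add_divide_distrib algebra_simps flip: exp_add)
    finally show ?thesis .
  qed
  moreover have "0 < \<phi> n" for n
    unfolding \<phi>_def using step_pos[of "Suc n"] by simp
  ultimately obtain c where c: "1 \<le> c" "\<And>l k. l \<le> k \<Longrightarrow> \<phi> l \<le> c * \<phi> k"
    using eventually_mono_imp_quasi_mono by metis
  have "s l * exp (-(cum_step k - cum_step l) / 2) \<le> c * s k" if lk: "l \<le> k" for l k
  proof (cases l)
    case 0
    then show ?thesis using c(1) step_nonneg[of k] by simp
  next
    case (Suc l')
    then obtain k' where k: "k = Suc k'" "l' \<le> k'" using lk by (cases k) auto
    have "s l * exp (-(cum_step k - cum_step l) / 2) = \<phi> l' * exp (- cum_step k / 2)"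
      unfolding \<phi>_def Suc by (simp add: diff_divide_distrib del: cum_step_Suc flip: exp_add)
    also have "\<dots> \<le> c * \<phi> k' * exp (- cum_step k / 2)"
      using c(2)[OF k(2)] by (intro mult_right_mono) auto
    also have "\<dots> = c * s k"
      unfolding \<phi>_def k by (simp del: cum_step_Suc flip: exp_add)
    finally show ?thesis .
  qed
  then show thesis using that c(1) by blast
qed

lemma cum_step_diff_ge:
  assumes "1 \<le> j" "j \<le> i"
  shows "\<eta> / (1 - \<alpha>) * (real i powr (1 - \<alpha>) - real j powr (1 - \<alpha>)) - \<eta> \<le> cum_step i - cum_step j"
proof -
  let ?a = "1 - \<alpha>"
  define f where "f r = real r powr ?a" for r
  have a: "0 < ?a" "?a < 1" using alpha_pos alpha_less_1 by auto
  have increment: "f (Suc r) - f r \<le> ?a * real r powr (-\<alpha>)" if "1 \<le> r" for r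
    using powr_diff_mvt_bounds(2)[of "real r" "real (Suc r)" ?a] that a by (simp add: f_def)
  have "(\<eta> / ?a) * (f (Suc i) - f (Suc j)) = (\<eta> / ?a) * (\<Sum>r = Suc j..i. f (Suc r) - f r)"
    using sum_Suc_diff[of "Suc j" i f] assms by simp
  also have "\<dots> \<le> (\<eta> / ?a) * (\<Sum>r = Suc j..i. ?a * real r powr (-\<alpha>))"
    using eta_pos a assms by (intro mult_left_mono sum_mono increment) auto
  also have "\<dots> = cum_step i - cum_step j"
    using a assms by (simp add: cum_step_diff sum_distrib_left step_def)
  finally have sum_bound: "(\<eta> / ?a) * (f (Suc i) - f (Suc j)) \<le> cum_step i - cum_step j" .
  have "real j powr (-\<alpha>) \<le> 1"
    using assms alpha_pos by (simp add: powr_minus inverse_le_1_iff ge_one_powr_ge_zero)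
  then have "?a * real j powr (-\<alpha>) \<le> ?a"
    using a by (simp add: mult_le_cancel_left1)
  then have "f (Suc j) - f j \<le> ?a"
    using increment[OF assms(1)] by linarith
  moreover have "f i \<le> f (Suc i)"
    unfolding f_def using a by (intro powr_mono2) auto
  ultimately have "(\<eta> / ?a) * (f i - f j - ?a) \<le> (\<eta> / ?a) * (f (Suc i) - f (Suc j))"
    using eta_pos a by (intro mult_left_mono) auto
  also have "(\<eta> / ?a) * (f i - f j - ?a) = \<eta> / ?a * (f i - f j) - \<eta>"
    using a by (simp add: field_simps)
  finally show ?thesis using sum_bound unfolding f_def by linarith
qed

lemma exp_neg_cum_step_diff_le:
  assumes "1 \<le> j" "j \<le> i"
  shows "exp (-(cum_step i - cum_step j))
    \<le> exp \<eta> * exp (\<eta> / (1 - \<alpha>) * (real j powr (1 - \<alpha>) - real i powr (1 - \<alpha>)))"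
  using cum_step_diff_ge[OF assms] by (simp add: algebra_simps flip: exp_add)

lemma exp_powr_gap_le:
  assumes "1 \<le> j" "j \<le> i"
  shows "exp (\<eta> / (1 - \<alpha>) * (real j powr (1 - \<alpha>) - real i powr (1 - \<alpha>)))
    \<le> exp (- \<eta> * real i powr (-\<alpha>) * (real i - real j))"
proof -
  have "(1 - \<alpha>) * (real i powr (-\<alpha>) * (real i - real j)) \<le> real i powr (1 - \<alpha>) - real j powr (1 - \<alpha>)"
    using powr_diff_mvt_bounds(1)[of "real j" "real i" "1 - \<alpha>"] assms alpha_pos alpha_less_1
    by simp
  then have "\<eta> / (1 - \<alpha>) * ((1 - \<alpha>) * (real i powr (-\<alpha>) * (real i - real j)))
      \<le> \<eta> / (1 - \<alpha>) * (real i powr (1 - \<alpha>) - real j powr (1 - \<alpha>))"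
    using alpha_less_1 eta_pos by (intro mult_left_mono) auto
  then have "\<eta> * real i powr (-\<alpha>) * (real i - real j)
      \<le> \<eta> / (1 - \<alpha>) * (real i powr (1 - \<alpha>) - real j powr (1 - \<alpha>))"
    using alpha_less_1 by simp
  then show ?thesis by (simp add: algebra_simps)
qed

definition weight :: "nat \<Rightarrow> nat \<Rightarrow> real" where
  "weight k m = (if 1 \<le> m \<and> m \<le> k then s m * damping m k else 0)"

definition kernel :: "nat \<Rightarrow> nat \<Rightarrow> real" where
  "kernel k l = (\<Sum>m = 1..min k l. weight k m * weight l m)"

lemma kernel_commute: "kernel k l = kernel l k"
  by (simp add: kernel_def min.commute mult.commute)

lemma sum_weight_products:
  assumes "min k l \<le> N"
  shows "(\<Sum>m = 1..N. weight k m * weight l m) = kernel k l"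
  unfolding kernel_def using assms by (intro sum.mono_neutral_right) (auto simp: weight_def)

lemma weight_Suc:
  "weight (Suc k) m = (1 - s (Suc k)) * weight k m + (if m = Suc k then s (Suc k) else 0)"
proof -
  have "damping m (Suc k) = damping m k * (1 - s (Suc k))" if "m \<le> k"
    using that by (simp add: damping_def)
  then show ?thesis by (auto simp: weight_def damping_def le_Suc_eq)
qed

lemma Xseq_eq_weighted_sum:
  "k \<le> N \<Longrightarrow> Xseq \<eta> \<alpha> x0 e k \<omega> = x0 * damping 0 k + (\<Sum>m = 1..N. weight k m * e m \<omega>)"
proof (induction k)
  case 0
  then show ?case by (simp add: damping_def weight_def)
next
  case (Suc k)
  let ?a = "1 - s (Suc k)"
  have new_noise: "(\<Sum>m = 1..N. (if m = Suc k then s (Suc k) else 0) * e m \<omega>) = s (Suc k) * e (Suc k) \<omega>"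
    using Suc.prems by (simp add: if_distrib[of "\<lambda>x. x * _"] cong: if_cong)
  have IH: "Xseq \<eta> \<alpha> x0 e k \<omega> = x0 * damping 0 k + (\<Sum>m = 1..N. weight k m * e m \<omega>)"
    using Suc by simp
  have "Xseq \<eta> \<alpha> x0 e (Suc k) \<omega> = ?a * Xseq \<eta> \<alpha> x0 e k \<omega> + s (Suc k) * e (Suc k) \<omega>"
    by simp
  also have "\<dots> = x0 * (damping 0 k * ?a) + (?a * (\<Sum>m = 1..N. weight k m * e m \<omega>)
      + (\<Sum>m = 1..N. (if m = Suc k then s (Suc k) else 0) * e m \<omega>))"
    unfolding IH new_noise by (simp add: algebra_simps)
  also have "\<dots> = x0 * damping 0 (Suc k) + (\<Sum>m = 1..N. weight (Suc k) m * e m \<omega>)"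
    by (simp add: weight_Suc damping_def distrib_right sum.distrib sum_distrib_left mult.assoc)
  finally show ?case .
qed

lemma weight_abs_le:
  obtains B where "0 \<le> B" "\<And>k m. \<bar>weight k m\<bar> \<le> B * s m * exp (-(cum_step k - cum_step m))"
proof -
  obtain B where B: "0 \<le> B" "\<And>k l. k \<le> l \<Longrightarrow> \<bar>damping k l\<bar> \<le> B * exp (-(cum_step l - cum_step k))"
    using damping_le_exp by blast
  have "\<bar>weight k m\<bar> \<le> B * s m * exp (-(cum_step k - cum_step m))" for k m
  proof (cases "1 \<le> m \<and> m \<le> k")
    case True
    then have "\<bar>weight k m\<bar> = s m * \<bar>damping m k\<bar>"
      by (simp add: weight_def abs_mult step_nonneg)
    also have "\<dots> \<le> s m * (B * exp (-(cum_step k - cum_step m)))"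
      using True B(2) step_nonneg by (intro mult_left_mono) auto
    finally show ?thesis by (simp add: mult_ac)
  qed (use B(1) step_nonneg in \<open>auto simp: weight_def\<close>)
  then show thesis using that B(1) by blast
qed

lemma kernel_abs_le:
  obtains A where "0 \<le> A" "\<And>k l. k \<le> l \<Longrightarrow> \<bar>kernel k l\<bar> \<le> A * s k * exp (-(cum_step l - cum_step k))"
proof -
  obtain B where B: "0 \<le> B" "\<And>k m. \<bar>weight k m\<bar> \<le> B * s m * exp (-(cum_step k - cum_step m))"
    using weight_abs_le by blast
  obtain c where c: "1 \<le> c" "\<And>l k. l \<le> k \<Longrightarrow> s l * exp (-(cum_step k - cum_step l) / 2) \<le> c * s k"
    using step_ratio_le by blast
  define g where "g k m = s m * exp (-(cum_step k - cum_step m))" for k m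
  have g_nonneg: "0 \<le> g k m" for k m
    unfolding g_def using step_nonneg by simp
  have weight: "\<bar>weight k m\<bar> \<le> B * g k m" for k m
    unfolding g_def using B(2) by (simp add: mult.assoc)
  have g_le: "g k m \<le> c * s k" if "m \<le> k" for k m
  proof -
    have "exp (-(cum_step k - cum_step m)) \<le> exp (-(cum_step k - cum_step m) / 2)"
      using cum_step_mono[OF that] by simp
    then have "g k m \<le> s m * exp (-(cum_step k - cum_step m) / 2)"
      unfolding g_def using step_nonneg by (simp add: mult_left_mono)
    also have "\<dots> \<le> c * s k" by (rule c(2)[OF that])
    finally show ?thesis .
  qed
  have "\<bar>kernel k l\<bar> \<le> B\<^sup>2 * c * (1 + \<eta>) * s k * exp (-(cum_step l - cum_step k))" if "k \<le> l" for k l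
  proof -
    let ?E = "exp (-(cum_step l - cum_step k))"
    have g_shift: "g l m = ?E * g k m" for m
      by (simp add: g_def algebra_simps flip: exp_add)
    have "\<bar>kernel k l\<bar> \<le> (\<Sum>m = 1..k. \<bar>weight k m * weight l m\<bar>)"
      unfolding kernel_def min_absorb1[OF that] by (rule sum_abs)
    also have "\<dots> \<le> (\<Sum>m = 1..k. (B * g k m) * (B * g l m))"
      using B(1) g_nonneg by (intro sum_mono) (auto simp: abs_mult intro!: mult_mono weight)
    also have "\<dots> = B\<^sup>2 * ?E * (\<Sum>m = 1..k. g k m * g k m)"
      by (simp add: g_shift sum_distrib_left power2_eq_square mult_ac)
    also have "\<dots> \<le> B\<^sup>2 * ?E * (\<Sum>m\<le>k. c * s k * g k m)"
    proof -
      have "(\<Sum>m = 1..k. g k m * g k m) \<le> (\<Sum>m = 1..k. c * s k * g k m)"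
        using g_le g_nonneg by (intro sum_mono mult_right_mono) auto
      also have "\<dots> \<le> (\<Sum>m\<le>k. c * s k * g k m)"
        using c(1) g_nonneg step_nonneg by (intro sum_mono2) auto
      finally show ?thesis by (intro mult_left_mono) auto
    qed
    also have "\<dots> \<le> B\<^sup>2 * ?E * (c * s k * (1 + \<eta>))"
      using sum_step_exp_backward_le[of k] c(1) step_nonneg[of k]
      by (auto simp: g_def simp flip: sum_distrib_left intro!: mult_left_mono)
    finally show ?thesis by (simp add: mult_ac)
  qed
  then show thesis using that[of "B\<^sup>2 * c * (1 + \<eta>)"] c(1) eta_pos by simp
qed

lemma kernel_past_sum_le:
  obtains K where "0 \<le> K"
    "\<And>F i j. F \<subseteq> {..j} \<Longrightarrow> j \<le> i \<Longrightarrow> (\<Sum>k\<in>F. \<bar>kernel k i\<bar>) \<le> K * exp (-(cum_step i - cum_step j))"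
proof -
  obtain A where A: "0 \<le> A" "\<And>k l. k \<le> l \<Longrightarrow> \<bar>kernel k l\<bar> \<le> A * s k * exp (-(cum_step l - cum_step k))"
    using kernel_abs_le by blast
  have "(\<Sum>k\<in>F. \<bar>kernel k i\<bar>) \<le> A * (1 + \<eta>) * exp (-(cum_step i - cum_step j))"
    if F: "F \<subseteq> {..j}" and "j \<le> i" for F i j
  proof -
    let ?E = "exp (-(cum_step i - cum_step j))"
    have "\<bar>kernel k i\<bar> \<le> A * ?E * (s k * exp (-(cum_step j - cum_step k)))" if "k \<in> F" for k
      using A(2)[of k i] that F \<open>j \<le> i\<close> by (auto simp: algebra_simps simp flip: exp_add)
    then have "(\<Sum>k\<in>F. \<bar>kernel k i\<bar>) \<le> (\<Sum>k\<in>F. A * ?E * (s k * exp (-(cum_step j - cum_step k))))"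
      by (rule sum_mono)
    also have "\<dots> \<le> (\<Sum>k\<le>j. A * ?E * (s k * exp (-(cum_step j - cum_step k))))"
      using A(1) step_nonneg F by (intro sum_mono2) auto
    also have "\<dots> \<le> A * ?E * (1 + \<eta>)"
      using A(1) sum_step_exp_backward_le[of j] by (simp add: mult_left_mono flip: sum_distrib_left)
    finally show ?thesis by (simp add: mult_ac)
  qed
  then show thesis using that[of "A * (1 + \<eta>)"] A(1) eta_pos by simp
qed

lemma kernel_future_sum_le:
  obtains K where "0 \<le> K" "\<And>F l. finite F \<Longrightarrow> (\<Sum>k\<in>F - {..l}. \<bar>kernel k l\<bar>) \<le> K"
proof -
  obtain A where A: "0 \<le> A" "\<And>k l. k \<le> l \<Longrightarrow> \<bar>kernel k l\<bar> \<le> A * s k * exp (-(cum_step l - cum_step k))"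
    using kernel_abs_le by blast
  obtain c where c: "1 \<le> c" "\<And>l k. l \<le> k \<Longrightarrow> s l * exp (-(cum_step k - cum_step l) / 2) \<le> c * s k"
    using step_ratio_le by blast
  \<comment> \<open>Half of the exponential decay is traded for the factor \<open>s l / s k\<close>.\<close>
  have future_term: "\<bar>kernel k l\<bar> \<le> A * c * (s k * exp (-(cum_step k - cum_step l) / 2))"
    if "l \<le> k" for k l
  proof -
    let ?E = "exp (-(cum_step k - cum_step l) / 2)"
    have "\<bar>kernel k l\<bar> \<le> A * (s l * ?E) * ?E"
      using A(2)[OF that] by (simp add: kernel_commute mult.assoc flip: exp_add)
    also have "\<dots> \<le> A * (c * s k) * ?E"
      using A(1) c(2)[OF that] by (intro mult_right_mono mult_left_mono) auto
    finally show ?thesis by (simp add: mult_ac)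
  qed
  have "(\<Sum>k\<in>F - {..l}. \<bar>kernel k l\<bar>) \<le> A * c * 2" if "finite F" for F l
  proof -
    obtain n where n: "F \<subseteq> {..n}"
      using \<open>finite F\<close> finite_nat_iff_bounded_le by blast
    have "(\<Sum>k\<in>F - {..l}. \<bar>kernel k l\<bar>)
        \<le> (\<Sum>k\<in>F - {..l}. A * c * (s k * exp (-(cum_step k - cum_step l) / 2)))"
      using future_term by (intro sum_mono) auto
    also have "\<dots> \<le> (\<Sum>k\<in>{l<..n}. A * c * (s k * exp (-(cum_step k - cum_step l) / 2)))"
      using A(1) c(1) step_nonneg n by (intro sum_mono2) auto
    also have "\<dots> \<le> A * c * 2"
      using A(1) c(1) sum_step_exp_forward_le[of l n] by (simp add: mult_left_mono flip: sum_distrib_left)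
    finally show ?thesis .
  qed
  then show thesis using that[of "A * c * 2"] A(1) c(1) by simp
qed

lemma kernel_row_sum_le:
  obtains K where "0 \<le> K" "\<And>F l. finite F \<Longrightarrow> (\<Sum>k\<in>F. \<bar>kernel k l\<bar>) \<le> K"
proof -
  obtain P where P: "0 \<le> P"
    "\<And>F i j. F \<subseteq> {..j} \<Longrightarrow> j \<le> i \<Longrightarrow> (\<Sum>k\<in>F. \<bar>kernel k i\<bar>) \<le> P * exp (-(cum_step i - cum_step j))"
    using kernel_past_sum_le by blast
  obtain Q where Q: "0 \<le> Q" "\<And>F l. finite F \<Longrightarrow> (\<Sum>k\<in>F - {..l}. \<bar>kernel k l\<bar>) \<le> Q"
    using kernel_future_sum_le by blast
  have "(\<Sum>k\<in>F. \<bar>kernel k l\<bar>) \<le> P + Q" if "finite F" for F l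
    using sum.Int_Diff[OF that, where g = "\<lambda>k. \<bar>kernel k l\<bar>" and B = "{..l}"]
      P(2)[of "F \<inter> {..l}" l l] Q(2)[OF that, of l]
    by simp
  then show thesis using that[of "P + Q"] P(1) Q(1) by simp
qed

end

context prob_space
begin

lemma cov_commute: "cov X Y = cov Y X"
  by (simp add: cov_def mult.commute)

lemma variance_eq_cov: "variance X = cov X X"
  by (simp add: cov_def power2_eq_square)

lemma cov_affine_combinations:
  fixes e :: "nat \<Rightarrow> 'a \<Rightarrow> real"
  assumes "finite F"
    and "\<And>m. m \<in> F \<Longrightarrow> integrable M (e m)"
    and "\<And>m. m \<in> F \<Longrightarrow> expectation (e m) = 0"
    and "\<And>m n. m \<in> F \<Longrightarrow> n \<in> F \<Longrightarrow> integrable M (\<lambda>\<omega>. e m \<omega> * e n \<omega>)"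
    and "\<And>m n. m \<in> F \<Longrightarrow> n \<in> F \<Longrightarrow> expectation (\<lambda>\<omega>. e m \<omega> * e n \<omega>) = (if m = n then v else 0)"
  shows "cov (\<lambda>\<omega>. a + (\<Sum>m\<in>F. u m * e m \<omega>)) (\<lambda>\<omega>. b + (\<Sum>m\<in>F. w m * e m \<omega>))
    = v * (\<Sum>m\<in>F. u m * w m)"
proof -
  have mean: "expectation (\<lambda>\<omega>. c + (\<Sum>m\<in>F. z m * e m \<omega>)) = c" for c z
    using assms(1-3) by (simp add: Bochner_Integration.integral_add Bochner_Integration.integral_sum prob_space)
  have "cov (\<lambda>\<omega>. a + (\<Sum>m\<in>F. u m * e m \<omega>)) (\<lambda>\<omega>. b + (\<Sum>m\<in>F. w m * e m \<omega>))
      = expectation (\<lambda>\<omega>. \<Sum>m\<in>F. \<Sum>n\<in>F. (u m * w n) * (e m \<omega> * e n \<omega>))"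
    unfolding cov_def mean by (simp add: sum_product algebra_simps)
  also have "\<dots> = (\<Sum>m\<in>F. \<Sum>n\<in>F. (u m * w n) * expectation (\<lambda>\<omega>. e m \<omega> * e n \<omega>))"
    using assms(4) by (simp add: Bochner_Integration.integral_sum integrable_sum)
  also have "\<dots> = (\<Sum>m\<in>F. \<Sum>n\<in>F. if m = n then u m * w n * v else 0)"
    by (intro sum.cong refl) (simp add: assms(5))
  also have "\<dots> = v * (\<Sum>m\<in>F. u m * w m)"
    using assms(1) by (simp add: sum_distrib_left mult_ac)
  finally show ?thesis .
qed

end

locale iid_noise = prob_space M for M :: "'a measure" +
  fixes e :: "nat \<Rightarrow> 'a \<Rightarrow> real"
  assumes noise_measurable: "\<And>i. e i \<in> borel_measurable M"
    and noise_indep: "indep_vars (\<lambda>_. borel) e {1..}"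
    and noise_identically_distributed: "\<And>i. 1 \<le> i \<Longrightarrow> distr M borel (e i) = distr M borel (e 1)"
    and noise_square_integrable: "integrable M (\<lambda>\<omega>. (e 1 \<omega>)\<^sup>2)"
    and noise_mean_zero: "expectation (e 1) = 0"
begin

abbreviation noise_var :: real where
  "noise_var \<equiv> expectation (\<lambda>\<omega>. (e 1 \<omega>)\<^sup>2)"

lemma noise_var_nonneg: "0 \<le> noise_var"
  by simp

lemma integrable_noise_comp:
  fixes g :: "real \<Rightarrow> real"
  assumes "1 \<le> k" "g \<in> borel_measurable borel" "integrable M (\<lambda>\<omega>. g (e 1 \<omega>))"
  shows "integrable M (\<lambda>\<omega>. g (e k \<omega>))"
  using integrable_distr_eq[OF noise_measurable[of k] assms(2)]
    integrable_distr_eq[OF noise_measurable[of 1] assms(2)]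
    noise_identically_distributed[OF assms(1)] assms(3)
  by simp

lemma expectation_noise_comp:
  fixes g :: "real \<Rightarrow> real"
  assumes "1 \<le> k" "g \<in> borel_measurable borel"
  shows "expectation (\<lambda>\<omega>. g (e k \<omega>)) = expectation (\<lambda>\<omega>. g (e 1 \<omega>))"
  using integral_distr[OF noise_measurable[of k] assms(2)]
    integral_distr[OF noise_measurable[of 1] assms(2)]
    noise_identically_distributed[OF assms(1)]
  by simp

lemma noise_square_integrable_at: "1 \<le> k \<Longrightarrow> integrable M (\<lambda>\<omega>. (e k \<omega>)\<^sup>2)"
  using integrable_noise_comp[of k "\<lambda>x. x\<^sup>2"] noise_square_integrable by simp

lemma noise_integrable: "1 \<le> k \<Longrightarrow> integrable M (e k)"
  using square_integrable_imp_integrable[OF noise_measurable noise_square_integrable_at] .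

lemma noise_expectation: "1 \<le> k \<Longrightarrow> expectation (e k) = 0"
  using expectation_noise_comp[of k "\<lambda>x. x"] noise_mean_zero by simp

lemma noise_products:
  assumes "1 \<le> m" "1 \<le> n"
  shows "integrable M (\<lambda>\<omega>. e m \<omega> * e n \<omega>)"
    and "expectation (\<lambda>\<omega>. e m \<omega> * e n \<omega>) = (if m = n then noise_var else 0)"
proof -
  have "integrable M (\<lambda>\<omega>. e m \<omega> * e n \<omega>)
    \<and> expectation (\<lambda>\<omega>. e m \<omega> * e n \<omega>) = (if m = n then noise_var else 0)"
  proof (cases "m = n")
    case True
    then show ?thesis
      using noise_square_integrable_at[OF assms(1)] expectation_noise_comp[OF assms(1), of "\<lambda>x. x\<^sup>2"]
      by (simp add: power2_eq_square)
  next
    case False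
    have "indep_vars (\<lambda>_. borel) e {m, n}"
      by (rule indep_vars_subset[OF noise_indep]) (use assms in auto)
    from indep_vars_sum[OF _ _ this] False
    have indep: "indep_var borel (e m) borel (e n)" by simp
    show ?thesis
      using indep_var_lebesgue_integral[OF indep] indep_var_integrable[OF indep]
        noise_integrable noise_expectation assms False by simp
  qed
  then show "integrable M (\<lambda>\<omega>. e m \<omega> * e n \<omega>)"
    and "expectation (\<lambda>\<omega>. e m \<omega> * e n \<omega>) = (if m = n then noise_var else 0)" by auto
qed

end

definition block :: "real \<Rightarrow> real \<Rightarrow> nat \<Rightarrow> nat set" where
  "block C \<alpha> i = {j. bstart C \<alpha> i \<le> int j \<and> j < i}"

lemma Wblock_eq_sum: "Wblock \<eta> \<alpha> C x0 e i = (\<lambda>\<omega>. \<Sum>j\<in>block C \<alpha> i. Xseq \<eta> \<alpha> x0 e j \<omega>)"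
  by (simp add: Wblock_def block_def fun_eq_iff)

lemma block_subset: "block C \<alpha> i \<subseteq> {..<i}"
  by (auto simp: block_def)

lemma finite_block: "finite (block C \<alpha> i)"
  by (rule finite_subset[OF block_subset]) simp

lemma blen_nonneg:
  assumes "0 \<le> C"
  shows "0 \<le> blen C \<alpha> i"
proof -
  have "0 \<le> C * real i powr \<alpha> * ln (real i)"
    using assms by (cases "i = 0") auto
  then show ?thesis by (simp add: blen_def)
qed

lemma card_block_le_blen:
  assumes "0 \<le> C"
  shows "real (card (block C \<alpha> i)) \<le> real_of_int (blen C \<alpha> i)"
proof -
  have "block C \<alpha> i \<subseteq> {nat (bstart C \<alpha> i)..<i}"
    by (auto simp: block_def)
  then have "card (block C \<alpha> i) \<le> i - nat (bstart C \<alpha> i)"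
    using card_mono[of "{nat (bstart C \<alpha> i)..<i}"] by simp
  moreover have "int (i - nat (bstart C \<alpha> i)) \<le> blen C \<alpha> i"
    using blen_nonneg[OF assms, of \<alpha> i] unfolding bstart_def by linarith
  ultimately show ?thesis by linarith
qed

locale linear_recursion = step_schedule \<eta> \<alpha> + iid_noise M e
  for \<eta> \<alpha> :: real and M :: "'a measure" and e :: "nat \<Rightarrow> 'a \<Rightarrow> real" +
  fixes x0 :: real
begin

abbreviation X :: "nat \<Rightarrow> 'a \<Rightarrow> real" where
  "X \<equiv> Xseq \<eta> \<alpha> x0 e"

lemma cov_sum_Xseq:
  assumes "finite Bk" "finite Bl"
  shows "cov (\<lambda>\<omega>. \<Sum>k\<in>Bk. X k \<omega>) (\<lambda>\<omega>. \<Sum>l\<in>Bl. X l \<omega>) = noise_var * (\<Sum>k\<in>Bk. \<Sum>l\<in>Bl. kernel k l)"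
proof -
  obtain N where N: "Bk \<subseteq> {..N}" "Bl \<subseteq> {..N}"
    using assms finite_nat_iff_bounded_le[of "Bk \<union> Bl"] by auto
  have sum_X: "(\<lambda>\<omega>. \<Sum>k\<in>B. X k \<omega>)
      = (\<lambda>\<omega>. (\<Sum>k\<in>B. x0 * damping 0 k) + (\<Sum>m = 1..N. (\<Sum>k\<in>B. weight k m) * e m \<omega>))"
    if "B \<subseteq> {..N}" for B
  proof
    fix \<omega>
    have "(\<Sum>k\<in>B. X k \<omega>) = (\<Sum>k\<in>B. x0 * damping 0 k + (\<Sum>m = 1..N. weight k m * e m \<omega>))"
      using that by (intro sum.cong refl Xseq_eq_weighted_sum) auto
    then show "(\<Sum>k\<in>B. X k \<omega>) = (\<Sum>k\<in>B. x0 * damping 0 k) + (\<Sum>m = 1..N. (\<Sum>k\<in>B. weight k m) * e m \<omega>)"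
      by (simp add: sum.distrib sum_distrib_right sum.swap[of _ B])
  qed
  have "(\<Sum>m = 1..N. (\<Sum>k\<in>Bk. weight k m) * (\<Sum>l\<in>Bl. weight l m))
      = (\<Sum>m = 1..N. \<Sum>k\<in>Bk. \<Sum>l\<in>Bl. weight k m * weight l m)"
    by (simp add: sum_product)
  also have "\<dots> = (\<Sum>k\<in>Bk. \<Sum>m = 1..N. \<Sum>l\<in>Bl. weight k m * weight l m)"
    by (rule sum.swap)
  also have "\<dots> = (\<Sum>k\<in>Bk. \<Sum>l\<in>Bl. \<Sum>m = 1..N. weight k m * weight l m)"
    by (rule sum.cong[OF refl], rule sum.swap)
  also have "\<dots> = (\<Sum>k\<in>Bk. \<Sum>l\<in>Bl. kernel k l)"
    using N by (intro sum.cong refl sum_weight_products) auto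
  finally have kernel_sum: "(\<Sum>m = 1..N. (\<Sum>k\<in>Bk. weight k m) * (\<Sum>l\<in>Bl. weight l m))
      = (\<Sum>k\<in>Bk. \<Sum>l\<in>Bl. kernel k l)" .
  show ?thesis
    unfolding sum_X[OF N(1)] sum_X[OF N(2)] kernel_sum[symmetric]
    by (rule cov_affine_combinations) (auto simp: noise_integrable noise_expectation noise_products)
qed

lemma cov_sum_Xseq_le:
  obtains K where "0 \<le> K" "\<And>Bk Bl. finite Bk \<Longrightarrow> finite Bl \<Longrightarrow>
    cov (\<lambda>\<omega>. \<Sum>k\<in>Bk. X k \<omega>) (\<lambda>\<omega>. \<Sum>l\<in>Bl. X l \<omega>) \<le> K * real (card Bk)"
proof -
  obtain R where R: "0 \<le> R" "\<And>F l. finite F \<Longrightarrow> (\<Sum>k\<in>F. \<bar>kernel k l\<bar>) \<le> R"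
    using kernel_row_sum_le by blast
  have "cov (\<lambda>\<omega>. \<Sum>k\<in>Bk. X k \<omega>) (\<lambda>\<omega>. \<Sum>l\<in>Bl. X l \<omega>) \<le> noise_var * R * real (card Bk)"
    if "finite Bk" "finite Bl" for Bk Bl
  proof -
    have "(\<Sum>k\<in>Bk. \<Sum>l\<in>Bl. kernel k l) \<le> (\<Sum>k\<in>Bk. \<Sum>l\<in>Bl. \<bar>kernel l k\<bar>)"
      by (intro sum_mono) (simp add: kernel_commute)
    also have "\<dots> \<le> (\<Sum>k\<in>Bk. R)"
      using R(2) that by (intro sum_mono) auto
    finally have "(\<Sum>k\<in>Bk. \<Sum>l\<in>Bl. kernel k l) \<le> R * real (card Bk)"
      by (simp add: mult.commute)
    then show ?thesis
      using noise_var_nonneg by (simp add: cov_sum_Xseq that mult.assoc mult_left_mono)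
  qed
  then show thesis using that[of "noise_var * R"] R(1) noise_var_nonneg by simp
qed

lemma cov_Xseq_sum_past_le:
  obtains K where "0 \<le> K" "\<And>F i j. F \<subseteq> {..j} \<Longrightarrow> 1 \<le> j \<Longrightarrow> j \<le> i \<Longrightarrow>
    cov (X i) (\<lambda>\<omega>. \<Sum>k\<in>F. X k \<omega>) \<le> K * exp (\<eta> / (1 - \<alpha>) * (real j powr (1 - \<alpha>) - real i powr (1 - \<alpha>)))"
proof -
  obtain P where P: "0 \<le> P"
    "\<And>F i j. F \<subseteq> {..j} \<Longrightarrow> j \<le> i \<Longrightarrow> (\<Sum>k\<in>F. \<bar>kernel k i\<bar>) \<le> P * exp (-(cum_step i - cum_step j))"
    using kernel_past_sum_le by blast
  let ?gap = "\<lambda>i j. exp (\<eta> / (1 - \<alpha>) * (real j powr (1 - \<alpha>) - real i powr (1 - \<alpha>)))"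
  have "cov (X i) (\<lambda>\<omega>. \<Sum>k\<in>F. X k \<omega>) \<le> noise_var * P * exp \<eta> * ?gap i j"
    if F: "F \<subseteq> {..j}" "1 \<le> j" "j \<le> i" for F i j
  proof -
    have "finite F" by (rule finite_subset[OF F(1)]) simp
    then have "cov (X i) (\<lambda>\<omega>. \<Sum>k\<in>F. X k \<omega>) = noise_var * (\<Sum>k\<in>F. kernel k i)"
      using cov_sum_Xseq[of "{i}" F] by (simp add: kernel_commute)
    also have "\<dots> \<le> noise_var * (P * exp (-(cum_step i - cum_step j)))"
      using P(2)[OF F(1,3)] noise_var_nonneg
      by (intro mult_left_mono order.trans[OF sum_mono[of F "\<lambda>k. kernel k i" "\<lambda>k. \<bar>kernel k i\<bar>"]]) auto
    also have "\<dots> \<le> noise_var * (P * (exp \<eta> * ?gap i j))"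
      using exp_neg_cum_step_diff_le[OF F(2,3)] P(1) noise_var_nonneg by (intro mult_left_mono) auto
    finally show ?thesis by (simp add: mult_ac)
  qed
  then show thesis using that[of "noise_var * P * exp \<eta>"] P(1) noise_var_nonneg by simp
qed

lemma Wblock_cov_bounds:
  assumes "0 \<le> C"
  shows "\<exists>K. \<forall>i j. 1 \<le> j \<and> j < i \<longrightarrow>
    variance (Wblock \<eta> \<alpha> C x0 e i) \<le> K * real_of_int (blen C \<alpha> i)
  \<and> cov (X i) (Wblock \<eta> \<alpha> C x0 e j)
      \<le> K * exp (\<eta> / (1 - \<alpha>) * (real j powr (1 - \<alpha>) - real i powr (1 - \<alpha>)))
  \<and> exp (\<eta> / (1 - \<alpha>) * (real j powr (1 - \<alpha>) - real i powr (1 - \<alpha>)))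
      \<le> exp (- \<eta> * real i powr (-\<alpha>) * (real i - real j))
  \<and> cov (X j) (Wblock \<eta> \<alpha> C x0 e i) \<le> K
  \<and> cov (Wblock \<eta> \<alpha> C x0 e i) (Wblock \<eta> \<alpha> C x0 e j) \<le> K * real_of_int (blen C \<alpha> j)"
proof -
  obtain K1 where K1: "0 \<le> K1" "\<And>Bk Bl. finite Bk \<Longrightarrow> finite Bl \<Longrightarrow>
      cov (\<lambda>\<omega>. \<Sum>k\<in>Bk. X k \<omega>) (\<lambda>\<omega>. \<Sum>l\<in>Bl. X l \<omega>) \<le> K1 * real (card Bk)"
    using cov_sum_Xseq_le by blast
  let ?gap = "\<lambda>i j. exp (\<eta> / (1 - \<alpha>) * (real j powr (1 - \<alpha>) - real i powr (1 - \<alpha>)))"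
  obtain K2 where K2: "0 \<le> K2" "\<And>F i j. F \<subseteq> {..j} \<Longrightarrow> 1 \<le> j \<Longrightarrow> j \<le> i \<Longrightarrow>
      cov (X i) (\<lambda>\<omega>. \<Sum>k\<in>F. X k \<omega>) \<le> K2 * ?gap i j"
    using cov_Xseq_sum_past_le by blast
  have block_cov: "cov (Wblock \<eta> \<alpha> C x0 e a) (Wblock \<eta> \<alpha> C x0 e b) \<le> max K1 K2 * real_of_int (blen C \<alpha> a)"
    for a b
  proof -
    have "cov (Wblock \<eta> \<alpha> C x0 e a) (Wblock \<eta> \<alpha> C x0 e b) \<le> K1 * real (card (block C \<alpha> a))"
      unfolding Wblock_eq_sum by (intro K1(2) finite_block)
    also have "\<dots> \<le> max K1 K2 * real_of_int (blen C \<alpha> a)"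
      using card_block_le_blen blen_nonneg K1(1) assms by (intro mult_mono) auto
    finally show ?thesis .
  qed
  show ?thesis
  proof (intro exI[of _ "max K1 K2"] allI impI conjI, goal_cases)
    case (1 i j)
    show ?case using block_cov[of i i] by (simp add: variance_eq_cov)
  next
    case (2 i j)
    have "cov (X i) (Wblock \<eta> \<alpha> C x0 e j) \<le> K2 * ?gap i j"
      unfolding Wblock_eq_sum using 2 block_subset[of C \<alpha> j] by (intro K2(2)) auto
    also have "\<dots> \<le> max K1 K2 * ?gap i j"
      by (intro mult_right_mono) auto
    finally show ?case .
  next
    case (3 i j)
    then show ?case by (intro exp_powr_gap_le) auto
  next
    case (4 i j)
    have "cov (X j) (Wblock \<eta> \<alpha> C x0 e i) \<le> K1 * real (card {j})"
      using K1(2)[of "{j}" "block C \<alpha> i"] by (simp add: Wblock_eq_sum finite_block)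
    then show ?case by simp
  next
    case (5 i j)
    show ?case using block_cov[of j i] by (simp add: cov_commute)
  qed
qed

end

theorem lemmaC2:
  fixes M :: "'a measure" and e :: "nat \<Rightarrow> 'a \<Rightarrow> real"
    and \<eta> \<alpha> C x0 :: real
  assumes "prob_space M"
    and "\<eta> > 0" and "1/2 < \<alpha>" and "\<alpha> < 1" and "C > 0"
    and "\<And>i. e i \<in> borel_measurable M"
    and "prob_space.indep_vars M (\<lambda>_. borel) e {1..}"
    and "\<And>i. i \<ge> 1 \<Longrightarrow> distr M borel (e i) = distr M borel (e 1)"
    and "integrable M (\<lambda>\<omega>. (e 1 \<omega>)\<^sup>2)"
    and "prob_space.expectation M (e 1) = 0"
    and "prob_space.expectation M (\<lambda>\<omega>. (e 1 \<omega>)\<^sup>2) > 0"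
  shows "\<exists>K. \<forall>i j. 1 \<le> j \<and> j < i \<longrightarrow>
    prob_space.variance M (Wblock \<eta> \<alpha> C x0 e i) \<le> K * real_of_int (blen C \<alpha> i)
  \<and> prob_space.cov M (Xseq \<eta> \<alpha> x0 e i) (Wblock \<eta> \<alpha> C x0 e j)
      \<le> K * exp (\<eta> / (1 - \<alpha>) * (real j powr (1 - \<alpha>) - real i powr (1 - \<alpha>)))
  \<and> exp (\<eta> / (1 - \<alpha>) * (real j powr (1 - \<alpha>) - real i powr (1 - \<alpha>)))
      \<le> exp (- \<eta> * real i powr (-\<alpha>) * (real i - real j))
  \<and> prob_space.cov M (Xseq \<eta> \<alpha> x0 e j) (Wblock \<eta> \<alpha> C x0 e i) \<le> K
  \<and> prob_space.cov M (Wblock \<eta> \<alpha> C x0 e i) (Wblock \<eta> \<alpha> C x0 e j) \<le> K * real_of_int (blen C \<alpha> j)"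
proof -
  interpret prob_space M by (rule assms(1))
  interpret linear_recursion \<eta> \<alpha> M e x0
  proof unfold_locales
    show "0 < \<alpha>" using assms(3) by linarith
  qed (fact assms)+
  show ?thesis
    using Wblock_cov_bounds assms(5) by simp
qed

end
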